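(* Let $n$ be a composite positive integer. Then: (i) for every $a\in\,]n[=\{1,\dots,n\}$, $d_{\{a\}}(\mathbb{Z}_n)=n/\gcd(a,n)$; (ii) for every $a\in\,]n[$ with $\gcd(a,n)=1$, $d_{\{a,n-a\}}(\mathbb{Z}_n)=1+\lfloor\log_2 n\rfloor$; (iii) if $A=\{a\in\,]n[\,:\gcd(a,n)=1\}$, then $d_A(\mathbb{Z}_n)=1+\Omega(n)$, where $\Omega(n)$ is the number of prime factors of $n$ counted with multiplicity; (iv) if $A=\,]n-1[=\{1,\dots,n-1\}$, then $d_A(\mathbb{Z}_n)=2$.
   Context: For an integer $x\ge1$, $]x[=\{1,2,\dots,x\}$. Let $G$ be a finite abelian group (written additively) of exponent $n$ and let $\emptyset\ne A\subseteq\, ]n[$. The constant $d_A(G)$ is the least positive integer $t$ such that for every sequence $g_1,\dots,g_t$ of (not necessarily distinct) elements of $G$ there exist $\ell\ge1$, indices $1\le i_1<\dots<i_\ell\le t$ and elements $a_1,\dots,a_\ell\in A$ (repetitions allowed) with $\sum_{j=1}^{\ell}a_j g_{i_j}=0$ in $G$. *)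

theory Defs
  imports "HOL-Computational_Algebra.Primes" "HOL-Number_Theory.Cong" Complex_Main
begin

text \<open>Elements of Z_n are represented by integers (taken modulo n).\<close>

definition has_A_zero_sum :: "nat \<Rightarrow> nat set \<Rightarrow> nat \<Rightarrow> bool" where
  "has_A_zero_sum n A t \<longleftrightarrow>
     (\<forall>g :: nat \<Rightarrow> int. \<exists>I c. I \<subseteq> {..<t} \<and> I \<noteq> {} \<and> (\<forall>i\<in>I. c i \<in> A) \<and>
        [(\<Sum>i\<in>I. int (c i) * g i) = 0] (mod int n))"

definition dA :: "nat \<Rightarrow> nat set \<Rightarrow> nat" where
  "dA n A = (LEAST t. t \<ge> 1 \<and> has_A_zero_sum n A t)"

end

theory Submission
  imports Defs
begin

text \<open>
  The upper bounds are pigeonhole arguments. For the single weight \<open>a\<close>, two of the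
  \<open>m + 1\<close> prefix sums of \<open>g\<^sub>1, \<dots>, g\<^sub>m\<close>, \<open>m = n / gcd a n\<close>, agree modulo \<open>m\<close>, so \<open>a\<close> times
  the segment between them vanishes modulo \<open>n\<close>. For the weights \<open>a\<close> and \<open>n - a\<close>, two of
  the \<open>2\<^sup>t\<close> subset sums agree modulo \<open>n < 2\<^sup>t\<close>; weighting the symmetric difference of the two
  subsets by \<open>a\<close> on one side and \<open>n - a \<equiv> -a\<close> on the other gives a zero sum. For the unit
  weights the pigeonhole is applied to parity vectors indexed by the \<open>\<Omega>(n)\<close> pairs \<open>(p, l)\<close>
  with \<open>p\<^sup>l\<^sup>+\<^sup>1\<close> dividing \<open>n\<close>, counting the terms of \<open>p\<close>-adic valuation exactly \<open>l\<close>. On the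
  symmetric difference of two subsets with equal vectors, terms of equal valuation below
  \<open>v\<^sub>p(n)\<close> pair up and each pair cancels modulo \<open>p\<^bsup>v\<^sub>p(n)\<^esup>\<close> with weights prime to \<open>p\<close>; the
  Chinese remainder theorem glues these local weights into units modulo \<open>n\<close>.

  The lower bounds come from explicit sequences: the constant sequence \<open>1\<close> for the single
  weight and for all nonzero weights; \<open>g\<^sub>i = 2\<^sup>i\<close> for \<open>{a, n - a}\<close>, where a zero sum would be a
  nonzero signed binary number of absolute value below \<open>n\<close>; and for the units the partial
  products \<open>p\<^sub>1 \<cdots> p\<^sub>i\<close> of the prime factors of \<open>n\<close>, where the term of least index in a zero sum
  forces \<open>p\<^sub>i\<^sub>+\<^sub>1\<close> to divide a unit.
\<close>

section \<open>Zero-sum sequences and the constant \<open>d\<^sub>A\<close>\<close>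

lemma has_A_zero_sum_mono:
  assumes "has_A_zero_sum n A t" "t \<le> t'"
  shows "has_A_zero_sum n A t'"
  using assms unfolding has_A_zero_sum_def by (meson lessThan_subset_iff order_trans)

lemma has_A_zero_sumI:
  assumes "\<And>g. \<exists>I c. I \<subseteq> {..<t} \<and> I \<noteq> {} \<and> (\<forall>i\<in>I. c i \<in> A) \<and>
                   int n dvd (\<Sum>i\<in>I. int (c i) * g i)"
  shows "has_A_zero_sum n A t"
  using assms by (simp add: has_A_zero_sum_def cong_0_iff)

lemma has_A_zero_sumE:
  assumes "has_A_zero_sum n A t"
  obtains I c where "I \<subseteq> {..<t}" "finite I" "I \<noteq> {}" "\<forall>i\<in>I. c i \<in> A"
    "int n dvd (\<Sum>i\<in>I. int (c i) * g i)"
proof -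
  from assms[unfolded has_A_zero_sum_def, rule_format, of g]
  obtain I c where "I \<subseteq> {..<t}" "I \<noteq> {}" "\<forall>i\<in>I. c i \<in> A"
    "[(\<Sum>i\<in>I. int (c i) * g i) = 0] (mod int n)"
    by blast
  with that show ?thesis
    by (metis cong_0_iff finite_lessThan finite_subset)
qed

lemma dA_eq_Suc:
  assumes "has_A_zero_sum n A (Suc k)" "\<not> has_A_zero_sum n A k"
  shows "dA n A = Suc k"
  unfolding dA_def
proof (rule Least_equality)
  show "1 \<le> Suc k \<and> has_A_zero_sum n A (Suc k)"
    using assms(1) by simp
  fix t assume "1 \<le> t \<and> has_A_zero_sum n A t"
  then show "Suc k \<le> t"
    using assms(2) has_A_zero_sum_mono not_less_eq_eq by blast
qed

lemma dvd_remaining_term: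
  fixes f :: "'b \<Rightarrow> 'a::comm_ring_1"
  assumes "finite I" "j \<in> I" "q dvd (\<Sum>i\<in>I. f i)" "\<And>i. i \<in> I \<Longrightarrow> i \<noteq> j \<Longrightarrow> q dvd f i"
  shows "q dvd f j"
proof -
  have "(\<Sum>i\<in>I. f i) = f j + (\<Sum>i\<in>I - {j}. f i)"
    using assms(1,2) by (simp add: sum.remove)
  moreover have "q dvd (\<Sum>i\<in>I - {j}. f i)"
    using assms(4) by (intro dvd_sum) simp
  ultimately show ?thesis
    using assms(3) by (simp add: dvd_add_left_iff)
qed

lemma zero_sum_segment:
  fixes g :: "nat \<Rightarrow> int"
  assumes "0 < m"
  obtains j1 j2 where "j1 < j2" "j2 \<le> m" "int m dvd (\<Sum>i\<in>{j1..<j2}. g i)"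
proof -
  define r where "r j = (\<Sum>i<j. g i) mod int m" for j
  have "r ` {..m} \<subseteq> {0..<int m}"
    using assms by (auto simp: r_def)
  then have "\<not> inj_on r {..m}"
    using card_inj_on_le[of r "{..m}" "{0..<int m}"] by auto
  then obtain j1 j2 where j: "j1 < j2" "j2 \<le> m" "r j1 = r j2"
    unfolding inj_on_def by (metis atMost_iff linorder_neqE_nat)
  have "(\<Sum>i<j2. g i) = (\<Sum>i<j1. g i) + (\<Sum>i\<in>{j1..<j2}. g i)"
    using j(1) by (simp add: atLeast0LessThan[symmetric] sum.atLeastLessThan_concat)
  then have "int m dvd (\<Sum>i\<in>{j1..<j2}. g i)"
    using j(3) by (simp add: r_def mod_eq_dvd_iff)
  with j(1,2) show ?thesis
    using that by blast
qed

lemma subsets_with_equal_image: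
  assumes "finite B" "card B < 2 ^ t" "\<And>S. S \<subseteq> {..<t} \<Longrightarrow> f S \<in> B"
  obtains S T where "S \<subseteq> {..<t}" "T \<subseteq> {..<t}" "S \<noteq> T" "f S = f T"
proof -
  have "\<not> inj_on f (Pow {..<t})"
    using card_inj_on_le[of f "Pow {..<t}" B] assms by (auto simp: card_Pow)
  with that show ?thesis
    by (metis PowD inj_onI)
qed

lemma even_card_filter_remove_pair:
  assumes "finite F" "x \<in> F" "y \<in> F" "x \<noteq> y" "P x \<longleftrightarrow> P y"
  shows "even (card {i \<in> F - {x, y}. P i}) \<longleftrightarrow> even (card {i \<in> F. P i})"
proof (cases "P x")
  case True
  then have "{i \<in> F. P i} = insert x (insert y {i \<in> F - {x, y}. P i})"
    using assms by auto
  then show ?thesis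
    using assms(1,4) by simp
next
  case False
  then have "{i \<in> F. P i} = {i \<in> F - {x, y}. P i}"
    using assms by auto
  then show ?thesis
    by simp
qed

lemma even_card_filter_symdiff:
  assumes "finite S" "finite T" "odd (card {i \<in> S. P i}) \<longleftrightarrow> odd (card {i \<in> T. P i})"
  shows "even (card {i \<in> (S - T) \<union> (T - S). P i})"
proof -
  let ?A = "{i \<in> S. P i}" and ?B = "{i \<in> T. P i}"
  have "{i \<in> (S - T) \<union> (T - S). P i} = (?A \<union> ?B) - (?A \<inter> ?B)"
    by auto
  then have "card {i \<in> (S - T) \<union> (T - S). P i} = card (?A \<union> ?B) - card (?A \<inter> ?B)"
    using assms(1,2) by (simp only:) (intro card_Diff_subset; auto)
  moreover have "card (?A \<union> ?B) + card (?A \<inter> ?B) = card ?A + card ?B"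
    using assms(1,2) card_Un_Int[of ?A ?B] by simp
  ultimately show ?thesis
    using assms(3) by presburger
qed

lemma prod_list_take_dvd:
  fixes xs :: "'a::comm_monoid_mult list"
  assumes "i \<le> j"
  shows "prod_list (take i xs) dvd prod_list (take j xs)"
proof -
  have "take j xs = take i xs @ take (j - i) (drop i xs)"
    using assms take_add[of i "j - i" xs] by simp
  then show ?thesis
    by simp
qed

lemma coprime_if_no_prime_factor_dvd:
  fixes c n :: nat
  assumes "n \<noteq> 0" "\<And>p. p \<in> prime_factors n \<Longrightarrow> \<not> p dvd c"
  shows "coprime c n"
proof (rule ccontr)
  assume "\<not> coprime c n"
  then obtain r where "r dvd c" "r dvd n" "\<not> is_unit r"
    by (rule not_coprimeE)
  moreover have "r \<noteq> 0"
    using assms(1) \<open>r dvd n\<close> by auto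
  ultimately obtain p where "prime p" "p dvd r"
    using prime_divisor_exists by blast
  with \<open>r dvd c\<close> \<open>r dvd n\<close> assms show False
    by (meson dvd_trans in_prime_factors_iff)
qed

lemma dvd_if_prime_power_factors_dvd:
  fixes n :: nat and x :: int
  assumes "n \<noteq> 0" "\<And>p. p \<in> prime_factors n \<Longrightarrow> int p ^ multiplicity p n dvd x"
  shows "int n dvd x"
proof (cases "x = 0")
  case False
  have "multiplicity p n \<le> multiplicity p (nat \<bar>x\<bar>)" if "prime p" for p
  proof (cases "p \<in> prime_factors n")
    case True
    then have "p ^ multiplicity p n dvd nat \<bar>x\<bar>"
      using assms(2) by simp
    with False that show ?thesis
      by (intro multiplicity_geI) auto
  next
    case False
    then show ?thesis
      using assms(1) that by (simp add: not_dvd_imp_multiplicity_0 in_prime_factors_iff)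
  qed
  then have "n dvd nat \<bar>x\<bar>"
    using assms(1) by (intro multiplicity_le_imp_dvd) auto
  then show ?thesis
    by simp
qed simp

section \<open>A single weight\<close>

lemma dA_singleton:
  assumes "0 < n"
  shows "dA n {a} = n div gcd a n"
proof -
  define m where "m = n div gcd a n"
  define a' where "a' = a div gcd a n"
  have n_eq: "n = gcd a n * m" and a_eq: "a = gcd a n * a'"
    by (simp_all add: m_def a'_def)
  have "0 < m"
    using assms n_eq by (metis mult_0_right neq0_conv)
  have "coprime a' m"
    using assms by (simp add: a'_def m_def div_gcd_coprime)
  have "has_A_zero_sum n {a} m"
  proof (rule has_A_zero_sumI)
    fix g :: "nat \<Rightarrow> int"
    obtain j1 j2 where j: "j1 < j2" "j2 \<le> m" "int m dvd (\<Sum>i\<in>{j1..<j2}. g i)"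
      using zero_sum_segment \<open>0 < m\<close> by blast
    have "int n dvd int a * (\<Sum>i\<in>{j1..<j2}. g i)"
      using j(3) by (subst n_eq, subst a_eq) (simp add: mult_dvd_mono mult.commute)
    then have "int n dvd (\<Sum>i\<in>{j1..<j2}. int a * g i)"
      by (simp add: sum_distrib_left)
    with j(1,2) show "\<exists>I c. I \<subseteq> {..<m} \<and> I \<noteq> {} \<and> (\<forall>i\<in>I. c i \<in> {a}) \<and>
                   int n dvd (\<Sum>i\<in>I. int (c i) * g i)"
      by (intro exI[of _ "{j1..<j2}"] exI[of _ "\<lambda>_. a"]) auto
  qed
  moreover have "\<not> has_A_zero_sum n {a} (m - 1)"
  proof
    assume "has_A_zero_sum n {a} (m - 1)"
    then obtain I c where I: "I \<subseteq> {..<m - 1}" "finite I" "I \<noteq> {}" "\<forall>i\<in>I. c i \<in> {a}"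
      "int n dvd (\<Sum>i\<in>I. int (c i) * 1)"
      by (rule has_A_zero_sumE)
    then have "n dvd a * card I"
      by (simp add: mult.commute flip: of_nat_mult)
    then have "m dvd a' * card I"
      using assms by (subst (asm) n_eq, subst (asm) a_eq) (simp add: mult.assoc)
    then have "m dvd card I"
      using \<open>coprime a' m\<close> by (simp add: coprime_commute coprime_dvd_mult_right_iff)
    moreover have "0 < card I" "card I < m"
      using I card_mono[OF _ I(1)] \<open>0 < m\<close> by auto
    ultimately show False
      using nat_dvd_not_less by blast
  qed
  ultimately show ?thesis
    using dA_eq_Suc[of n "{a}" "m - 1"] \<open>0 < m\<close> by (simp add: m_def)
qed

section \<open>All nonzero weights\<close>

lemma annihilator_of_non_coprime:
  fixes x :: int
  assumes "\<not> coprime x (int n)" "0 < n"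
  obtains c where "c \<in> {1..n - 1}" "int n dvd int c * x"
proof -
  define d where "d = nat (gcd x (int n))"
  have "d dvd n" "d \<noteq> 1" "0 < d"
    using assms by (auto simp: d_def coprime_iff_gcd_eq_1 simp flip: int_dvd_int_iff)
  then obtain c where n_eq: "n = d * c"
    by (blast elim: dvdE)
  have "0 < c"
    using assms(2) n_eq by (metis mult_0_right neq0_conv)
  moreover have "c < n"
    using \<open>0 < c\<close> \<open>d \<noteq> 1\<close> \<open>0 < d\<close> by (simp add: n_eq)
  ultimately have "c \<in> {1..n - 1}"
    by simp
  have "int d dvd x"
    by (simp add: d_def)
  then have "int n dvd int c * x"
    by (simp add: n_eq mult.commute mult_dvd_mono)
  with \<open>c \<in> {1..n - 1}\<close> show ?thesis
    by (rule that)
qed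

lemma has_zero_sum_two_terms:
  assumes "1 < n"
  shows "has_A_zero_sum n {1..n - 1} 2"
proof (rule has_A_zero_sumI)
  fix g :: "nat \<Rightarrow> int"
  let ?goal = "\<exists>I c. I \<subseteq> {..<2} \<and> I \<noteq> {} \<and> (\<forall>i\<in>I. c i \<in> {1..n - 1}) \<and>
                 int n dvd (\<Sum>i\<in>I. int (c i) * g i)"
  consider "int n dvd g 0" | "\<not> coprime (g 1) (int n)"
    | "\<not> int n dvd g 0" "coprime (g 1) (int n)"
    by blast
  then show ?goal
  proof cases
    case 1
    with assms show ?goal
      by (intro exI[of _ "{0}"] exI[of _ "\<lambda>_. 1"]) auto
  next
    case 2
    with assms obtain c where "c \<in> {1..n - 1}" "int n dvd int c * g 1"
      by (elim annihilator_of_non_coprime) auto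
    then show ?goal
      by (intro exI[of _ "{1}"] exI[of _ "\<lambda>_. c"]) auto
  next
    case 3
    then obtain w where w: "[g 1 * w = 1] (mod int n)"
      using cong_solve_coprime_int by blast
    define c where "c = nat ((- g 0 * w) mod int n)"
    have c: "int c = (- g 0 * w) mod int n"
      using assms by (simp add: c_def)
    then have "[int c * g 1 = - g 0 * (g 1 * w)] (mod int n)"
      by (metis cong_mod_left cong_refl cong_scalar_right mult.assoc mult.commute)
    also have "[- g 0 * (g 1 * w) = - g 0] (mod int n)"
      using cong_scalar_left[OF w, of "- g 0"] by simp
    finally have "int n dvd int 1 * g 0 + int c * g 1"
      by (simp add: cong_iff_dvd_diff add.commute)
    moreover have "c \<noteq> 0"
    proof
      assume "c = 0"
      with \<open>int n dvd int 1 * g 0 + int c * g 1\<close> 3(1) show False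
        by simp
    qed
    moreover have "int c < int n"
      using assms unfolding c by simp
    ultimately show ?goal
      by (intro exI[of _ "{0, 1}"] exI[of _ "\<lambda>i. if i = 0 then 1 else c"]) auto
  qed
qed

lemma dA_all_nonzero_weights:
  assumes "1 < n"
  shows "dA n {1..n - 1} = 2"
proof -
  have "\<not> has_A_zero_sum n {1..n - 1} 1"
  proof
    assume "has_A_zero_sum n {1..n - 1} 1"
    then obtain I and c :: "nat \<Rightarrow> nat" where I: "I \<subseteq> {..<1}" "finite I" "I \<noteq> {}"
      "\<forall>i\<in>I. c i \<in> {1..n - 1}" "int n dvd (\<Sum>i\<in>I. int (c i) * 1)"
      by (rule has_A_zero_sumE[where g = "\<lambda>_. 1"])
    then have "I = {0}"
      by auto
    with I have "n dvd c 0" "0 < c 0" "c 0 < n"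
      by auto
    then show False
      using nat_dvd_not_less by blast
  qed
  then show ?thesis
    using dA_eq_Suc[of n _ 1] has_zero_sum_two_terms[OF assms] by (simp add: numeral_2_eq_2)
qed

section \<open>The weights \<open>a\<close> and \<open>-a\<close>\<close>

lemma signed_sum_of_powers_of_two_nonzero:
  fixes e :: "nat \<Rightarrow> int"
  assumes "finite I" "I \<noteq> {}" "\<And>i. i \<in> I \<Longrightarrow> \<bar>e i\<bar> = 1"
  shows "(\<Sum>i\<in>I. e i * 2 ^ i) \<noteq> 0"
proof
  define j where "j = Min I"
  have "j \<in> I"
    using assms(1,2) by (simp add: j_def)
  assume "(\<Sum>i\<in>I. e i * 2 ^ i) = 0"
  have "2 ^ Suc j dvd e j * 2 ^ j"
  proof (rule dvd_remaining_term[OF assms(1) \<open>j \<in> I\<close>])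
    show "2 ^ Suc j dvd (\<Sum>i\<in>I. e i * 2 ^ i)"
      using \<open>(\<Sum>i\<in>I. e i * 2 ^ i) = 0\<close> by simp
    fix i assume "i \<in> I" "i \<noteq> j"
    moreover have "j \<le> i"
      using assms(1) \<open>i \<in> I\<close> by (simp add: j_def)
    ultimately have "Suc j \<le> i"
      by simp
    then show "2 ^ Suc j dvd e i * 2 ^ i"
      by (intro dvd_mult le_imp_power_dvd)
  qed
  moreover have "e j * e j = 1"
    using assms(3)[OF \<open>j \<in> I\<close>] by (metis abs_mult_self_eq mult_1)
  ultimately have "(2::int) ^ Suc j dvd 2 ^ j"
    by (metis dvd_mult mult.assoc mult_1)
  then show False
    using zdvd_imp_le[of "2 ^ Suc j" "2 ^ j"] by simp
qed

lemma has_zero_sum_opposite_weights: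
  assumes "0 < n" "a \<le> n" "n < 2 ^ t"
  shows "has_A_zero_sum n {a, n - a} t"
proof (rule has_A_zero_sumI)
  fix g :: "nat \<Rightarrow> int"
  obtain S T where ST: "S \<subseteq> {..<t}" "T \<subseteq> {..<t}" "S \<noteq> T"
    and "(\<Sum>i\<in>S. g i) mod int n = (\<Sum>i\<in>T. g i) mod int n"
    using subsets_with_equal_image[of "{0..<int n}" t "\<lambda>S. (\<Sum>i\<in>S. g i) mod int n"] assms
    by auto
  have "finite S" "finite T"
    using ST finite_subset by blast+
  then have "(\<Sum>i\<in>S. g i) - (\<Sum>i\<in>T. g i) = (\<Sum>i\<in>S - T. g i) - (\<Sum>i\<in>T - S. g i)"
    by (metis Int_commute add_diff_cancel_left sum.Int_Diff)
  moreover have "int n dvd (\<Sum>i\<in>S. g i) - (\<Sum>i\<in>T. g i)"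
    using \<open>(\<Sum>i\<in>S. g i) mod int n = (\<Sum>i\<in>T. g i) mod int n\<close> by (simp add: mod_eq_dvd_iff)
  ultimately have diff: "int n dvd (\<Sum>i\<in>S - T. g i) - (\<Sum>i\<in>T - S. g i)"
    by simp
  define c where "c i = (if i \<in> S then a else n - a)" for i
  have "(\<Sum>i\<in>(S - T) \<union> (T - S). int (c i) * g i)
        = (\<Sum>i\<in>S - T. int (c i) * g i) + (\<Sum>i\<in>T - S. int (c i) * g i)"
    using \<open>finite S\<close> \<open>finite T\<close> by (intro sum.union_disjoint) auto
  also have "(\<Sum>i\<in>S - T. int (c i) * g i) = int a * (\<Sum>i\<in>S - T. g i)"
    by (simp add: c_def sum_distrib_left)
  also have "(\<Sum>i\<in>T - S. int (c i) * g i) = (int n - int a) * (\<Sum>i\<in>T - S. g i)"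
    using assms(2) by (simp add: c_def sum_distrib_left of_nat_diff)
  finally have "(\<Sum>i\<in>(S - T) \<union> (T - S). int (c i) * g i)
        = int a * ((\<Sum>i\<in>S - T. g i) - (\<Sum>i\<in>T - S. g i)) + int n * (\<Sum>i\<in>T - S. g i)"
    by (simp add: algebra_simps)
  with diff have "int n dvd (\<Sum>i\<in>(S - T) \<union> (T - S). int (c i) * g i)"
    by simp
  with ST show "\<exists>I c. I \<subseteq> {..<t} \<and> I \<noteq> {} \<and> (\<forall>i\<in>I. c i \<in> {a, n - a}) \<and>
                   int n dvd (\<Sum>i\<in>I. int (c i) * g i)"
    by (intro exI[of _ "(S - T) \<union> (T - S)"] exI[of _ c]) (auto simp: c_def)
qed

lemma no_zero_sum_opposite_weights:
  assumes "coprime a n" "a \<le> n" "2 ^ t \<le> n"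
  shows "\<not> has_A_zero_sum n {a, n - a} t"
proof
  assume "has_A_zero_sum n {a, n - a} t"
  then obtain I and c :: "nat \<Rightarrow> nat" where I: "I \<subseteq> {..<t}" "finite I" "I \<noteq> {}"
      "\<forall>i\<in>I. c i \<in> {a, n - a}" "int n dvd (\<Sum>i\<in>I. int (c i) * 2 ^ i)"
    by (rule has_A_zero_sumE[where g = "\<lambda>i. 2 ^ i"])
  define e where "e i = (if c i = a then 1 else - 1 :: int)" for i
  have "int (c i) = int a * e i + (if c i = a then 0 else int n)" if "i \<in> I" for i
    using I(4) that assms(2) by (auto simp: e_def of_nat_diff)
  then have "(\<Sum>i\<in>I. int (c i) * 2 ^ i)
             = (\<Sum>i\<in>I. int a * (e i * 2 ^ i) + int n * (if c i = a then 0 else 2 ^ i))"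
    by (intro sum.cong) (auto simp: algebra_simps)
  also have "\<dots> = int a * (\<Sum>i\<in>I. e i * 2 ^ i) + int n * (\<Sum>i\<in>I. if c i = a then 0 else 2 ^ i)"
    by (simp add: sum.distrib sum_distrib_left)
  finally have "(\<Sum>i\<in>I. int (c i) * 2 ^ i)
             = int a * (\<Sum>i\<in>I. e i * 2 ^ i) + int n * (\<Sum>i\<in>I. if c i = a then 0 else 2 ^ i)" .
  with I(5) have "int n dvd int a * (\<Sum>i\<in>I. e i * 2 ^ i)"
    by (simp add: dvd_add_left_iff)
  then have "int n dvd (\<Sum>i\<in>I. e i * 2 ^ i)"
    using assms(1) by (simp add: coprime_commute coprime_dvd_mult_right_iff)
  moreover have "(\<Sum>i\<in>I. e i * 2 ^ i) \<noteq> 0"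
    using I(2,3) by (intro signed_sum_of_powers_of_two_nonzero) (auto simp: e_def)
  ultimately have "int n \<le> \<bar>\<Sum>i\<in>I. e i * 2 ^ i\<bar>"
    using dvd_imp_le_int[of _ "int n"] by fastforce
  also have "\<dots> \<le> (\<Sum>i\<in>I. \<bar>e i * 2 ^ i\<bar>)"
    by (rule sum_abs)
  also have "\<dots> = (\<Sum>i\<in>I. 2 ^ i)"
    by (intro sum.cong) (auto simp: e_def abs_mult)
  also have "\<dots> \<le> (\<Sum>i<t. 2 ^ i)"
    using I(1) by (intro sum_mono2) auto
  also have "\<dots> < 2 ^ t"
    by (induction t) auto
  finally show False
    using assms(3) by (simp add: not_less flip: of_nat_le_iff)
qed

lemma floor_log2_bounds:
  assumes "0 < n" "k = nat \<lfloor>log 2 (real n)\<rfloor>"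
  shows "2 ^ k \<le> n" "n < 2 ^ Suc k"
proof -
  have "\<lfloor>log 2 (real n)\<rfloor> = int k"
    using assms by simp
  then show "2 ^ k \<le> n" "n < 2 ^ Suc k"
    using floor_log_nat_eq_powr_iff[where b = 2 and k = n and n = k] assms(1) by simp_all
qed

lemma dA_opposite_weights:
  assumes "1 < n" "a \<le> n" "coprime a n"
  shows "dA n {a, n - a} = Suc (nat \<lfloor>log 2 (real n)\<rfloor>)"
  using assms floor_log2_bounds[of n]
  by (intro dA_eq_Suc has_zero_sum_opposite_weights no_zero_sum_opposite_weights) auto

section \<open>Unit weights\<close>

text \<open>\<open>exact_power_dvd p l x\<close> says \<open>v\<^sub>p(x) = l\<close>; it holds for no \<open>l\<close> when \<open>x = 0\<close>.\<close>

definition exact_power_dvd :: "nat \<Rightarrow> nat \<Rightarrow> int \<Rightarrow> bool" where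
  "exact_power_dvd p l x \<longleftrightarrow> int p ^ l dvd x \<and> \<not> int p ^ Suc l dvd x"

lemma exact_power_dvd_unique:
  assumes "exact_power_dvd p l x" "exact_power_dvd p l' x"
  shows "l = l'"
proof (rule ccontr)
  assume "l \<noteq> l'"
  then have "Suc l \<le> l' \<or> Suc l' \<le> l"
    by linarith
  then show False
    using assms unfolding exact_power_dvd_def by (meson dvd_trans le_imp_power_dvd)
qed

lemma power_dvd_if_no_exact_power_below:
  assumes "\<And>l. l < a \<Longrightarrow> \<not> exact_power_dvd p l x"
  shows "int p ^ a dvd x"
proof -
  have "int p ^ l dvd x" if "l \<le> a" for l
    using that
  proof (induction l)
    case (Suc l)
    then show ?case
      using assms[of l] by (simp add: exact_power_dvd_def)
  qed simp
  then show ?thesis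
    by simp
qed

lemma exact_power_pair_cancel:
  assumes "prime p" "l < a" "exact_power_dvd p l x" "exact_power_dvd p l y"
  obtains u w :: nat where "\<not> p dvd u" "\<not> p dvd w" "int p ^ a dvd int u * x + int w * y"
proof -
  obtain x' y' where x: "x = int p ^ l * x'" and y: "y = int p ^ l * y'"
    using assms(3,4) unfolding exact_power_dvd_def by (meson dvdE)
  have "\<not> int p dvd x'" "\<not> int p dvd y'"
    using assms(3,4) by (auto simp: exact_power_dvd_def x y mult_dvd_mono)
  text \<open>Weights congruent to \<open>y'\<close> and \<open>-x'\<close> cancel the pair exactly.\<close>
  define q where "q = int p ^ a"
  have "0 < q" "int p dvd q"
    using assms(1,2) by (auto simp: q_def prime_gt_0_nat dvd_power)
  define u where "u = nat (y' mod q)"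
  define w where "w = nat (- x' mod q)"
  have u: "[int u = y'] (mod q)" and w: "[int w = - x'] (mod q)"
    using \<open>0 < q\<close> by (simp_all add: u_def w_def cong_def)
  have "[int u * x + int w * y = y' * x + - x' * y] (mod q)"
    by (intro cong_add cong_mult u w cong_refl)
  moreover have "y' * x + - x' * y = 0"
    by (simp add: x y)
  ultimately have "q dvd int u * x + int w * y"
    by (simp add: cong_0_iff)
  moreover have "\<not> p dvd u"
  proof
    assume "p dvd u"
    moreover have "[int u = y'] (mod int p)"
      using u \<open>int p dvd q\<close> by (rule cong_dvd_modulus)
    ultimately show False
      using \<open>\<not> int p dvd y'\<close> cong_dvd_iff by (metis int_dvd_int_iff)
  qed
  moreover have "\<not> p dvd w"
  proof
    assume "p dvd w"
    moreover have "[int w = - x'] (mod int p)"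
      using w \<open>int p dvd q\<close> by (rule cong_dvd_modulus)
    ultimately show False
      using \<open>\<not> int p dvd x'\<close> cong_dvd_iff by (metis dvd_minus_iff int_dvd_int_iff)
  qed
  ultimately show ?thesis
    using that unfolding q_def by blast
qed

lemma even_level_partner:
  assumes "finite F" "x \<in> F" "l < a" "exact_power_dvd p l (g x)"
    and "\<And>l. l < a \<Longrightarrow> even (card {i \<in> F. exact_power_dvd p l (g i)})"
  obtains y where "y \<in> F" "y \<noteq> x" "exact_power_dvd p l (g y)"
    "\<And>l'. l' < a \<Longrightarrow> even (card {i \<in> F - {x, y}. exact_power_dvd p l' (g i)})"
proof -
  have "{i \<in> F. exact_power_dvd p l (g i)} \<noteq> {x}"
    using assms(3) assms(5)[of l] by auto
  with assms(2,4) obtain y where y: "y \<in> F" "y \<noteq> x" "exact_power_dvd p l (g y)"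
    by blast
  moreover have "even (card {i \<in> F - {x, y}. exact_power_dvd p l' (g i)})" if "l' < a" for l'
  proof -
    have "exact_power_dvd p l' (g x) \<longleftrightarrow> l' = l" "exact_power_dvd p l' (g y) \<longleftrightarrow> l' = l"
      using assms(4) y(3) exact_power_dvd_unique by blast+
    then show ?thesis
      using even_card_filter_remove_pair[OF assms(1,2) y(1) y(2)[symmetric]] assms(5) that
      by simp
  qed
  ultimately show ?thesis
    using that by blast
qed

lemma prime_power_dvd_weighted_sum:
  fixes g :: "nat \<Rightarrow> int"
  assumes "prime p" "finite F"
    and "\<And>l. l < a \<Longrightarrow> even (card {i \<in> F. exact_power_dvd p l (g i)})"
  shows "\<exists>v. (\<forall>i. \<not> p dvd v i) \<and> int p ^ a dvd (\<Sum>i\<in>F. int (v i) * g i)"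
  using assms(2,3)
proof (induction F rule: finite_psubset_induct)
  case (psubset F)
  show ?case
  proof (cases "\<exists>x\<in>F. \<exists>l<a. exact_power_dvd p l (g x)")
    case False
    then have "int p ^ a dvd (\<Sum>i\<in>F. int 1 * g i)"
      by (intro dvd_sum) (simp add: power_dvd_if_no_exact_power_below)
    moreover have "\<not> p dvd 1"
      using prime_gt_1_nat[OF assms(1)] by auto
    ultimately show ?thesis
      by (intro exI[of _ "\<lambda>_. 1"]) simp
  next
    case True
    then obtain x l where x: "x \<in> F" "l < a" "exact_power_dvd p l (g x)"
      by blast
    obtain y where y: "y \<in> F" "y \<noteq> x" "exact_power_dvd p l (g y)"
      and "\<And>l'. l' < a \<Longrightarrow> even (card {i \<in> F - {x, y}. exact_power_dvd p l' (g i)})"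
      using even_level_partner[OF psubset.hyps x psubset.prems] by metis
    moreover have "F - {x, y} \<subset> F"
      using x(1) by auto
    ultimately obtain v where v: "\<forall>i. \<not> p dvd v i" "int p ^ a dvd (\<Sum>i\<in>F - {x, y}. int (v i) * g i)"
      using psubset.IH by blast
    obtain u w where uw: "\<not> p dvd u" "\<not> p dvd w" "int p ^ a dvd int u * g x + int w * g y"
      using exact_power_pair_cancel[OF assms(1) x(2,3) y(3)] by blast
    define v' where "v' = v(x := u, y := w)"
    define F' where "F' = F - {x, y}"
    have F: "F = insert x (insert y F')" and "x \<notin> insert y F'" "y \<notin> F'" "finite F'"
      using x(1) y(1,2) psubset.hyps by (auto simp: F'_def)
    then have "(\<Sum>i\<in>F'. int (v' i) * g i) = (\<Sum>i\<in>F'. int (v i) * g i)"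
      by (intro sum.cong) (auto simp: v'_def)
    with \<open>x \<notin> insert y F'\<close> \<open>y \<notin> F'\<close> \<open>finite F'\<close> y(2)
    have "(\<Sum>i\<in>F. int (v' i) * g i) = (int u * g x + int w * g y) + (\<Sum>i\<in>F'. int (v i) * g i)"
      unfolding F by (simp add: v'_def)
    then have "int p ^ a dvd (\<Sum>i\<in>F. int (v' i) * g i)"
      using uw(3) v(2) by (simp add: F'_def)
    moreover have "\<forall>i. \<not> p dvd v' i"
      using v(1) uw(1,2) by (simp add: v'_def)
    ultimately show ?thesis
      by blast
  qed
qed

lemma unit_with_prescribed_residues:
  fixes n :: nat and v :: "nat \<Rightarrow> nat"
  assumes "1 < n" "\<And>p. p \<in> prime_factors n \<Longrightarrow> \<not> p dvd v p"
  obtains c where "c \<in> {1..n}" "coprime c n"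
    "\<And>p. p \<in> prime_factors n \<Longrightarrow> [c = v p] (mod p ^ multiplicity p n)"
proof -
  have "\<forall>p\<in>prime_factors n. \<forall>q\<in>prime_factors n. p \<noteq> q \<longrightarrow>
          coprime (p ^ multiplicity p n) (q ^ multiplicity q n)"
    by (auto simp: in_prime_factors_imp_prime primes_coprime)
  then obtain w where w: "\<forall>p\<in>prime_factors n. [w = v p] (mod p ^ multiplicity p n)"
    using chinese_remainder_nat[of "prime_factors n" "\<lambda>p. p ^ multiplicity p n" v] by auto
  define c where "c = w mod n"
  have c: "[c = v p] (mod p ^ multiplicity p n)" if "p \<in> prime_factors n" for p
  proof -
    have "[c = w] (mod n)"
      by (simp add: c_def cong_def)
    then have "[c = w] (mod p ^ multiplicity p n)"
      by (rule cong_dvd_modulus_nat[OF _ multiplicity_dvd])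
    then show ?thesis
      using w that by (auto intro: cong_trans)
  qed
  have "coprime c n"
  proof (rule coprime_if_no_prime_factor_dvd)
    fix p assume p: "p \<in> prime_factors n"
    then have "p dvd p ^ multiplicity p n"
      using assms(1) by (simp add: prime_factors_multiplicity dvd_power)
    then have "[c = v p] (mod p)"
      by (rule cong_dvd_modulus_nat[OF c[OF p]])
    then show "\<not> p dvd c"
      using cong_dvd_iff[of c "v p" p] assms(2)[OF p] by simp
  qed (use assms(1) in simp)
  then have "c \<noteq> 0"
    using assms(1) by (intro notI) simp
  then have "c \<in> {1..n}"
    using assms(1) by (simp add: c_def)
  then show ?thesis
    by (rule that[OF _ \<open>coprime c n\<close> c])
qed

lemma unit_weights_from_prime_power_weights:
  fixes g :: "nat \<Rightarrow> int"
  assumes "1 < n"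
    and "\<And>p. p \<in> prime_factors n \<Longrightarrow>
           \<exists>v. (\<forall>i. \<not> p dvd v i) \<and> int p ^ multiplicity p n dvd (\<Sum>i\<in>F. int (v i) * g i)"
  shows "\<exists>c. (\<forall>i. c i \<in> {1..n} \<and> coprime (c i) n) \<and> int n dvd (\<Sum>i\<in>F. int (c i) * g i)"
proof -
  have "\<forall>p\<in>prime_factors n. \<exists>v. (\<forall>i. \<not> p dvd v i) \<and>
          int p ^ multiplicity p n dvd (\<Sum>i\<in>F. int (v i) * g i)"
    using assms(2) by blast
  then obtain V where V: "\<forall>p\<in>prime_factors n. (\<forall>i. \<not> p dvd V p i) \<and>
          int p ^ multiplicity p n dvd (\<Sum>i\<in>F. int (V p i) * g i)"
    by (rule bchoice[THEN exE])
  have "\<forall>i. \<exists>c. c \<in> {1..n} \<and> coprime c n \<and>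
          (\<forall>p\<in>prime_factors n. [c = V p i] (mod p ^ multiplicity p n))"
  proof
    fix i
    show "\<exists>c. c \<in> {1..n} \<and> coprime c n \<and>
            (\<forall>p\<in>prime_factors n. [c = V p i] (mod p ^ multiplicity p n))"
      by (rule unit_with_prescribed_residues[OF assms(1), of "\<lambda>p. V p i"]) (use V in auto)
  qed
  then obtain c where c: "\<forall>i. c i \<in> {1..n} \<and> coprime (c i) n \<and>
          (\<forall>p\<in>prime_factors n. [c i = V p i] (mod p ^ multiplicity p n))"
    by (rule choice[THEN exE])
  have "int p ^ multiplicity p n dvd (\<Sum>i\<in>F. int (c i) * g i)" if p: "p \<in> prime_factors n" for p
  proof -
    have "[(\<Sum>i\<in>F. int (c i) * g i) = (\<Sum>i\<in>F. int (V p i) * g i)] (mod int (p ^ multiplicity p n))"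
      using c p by (intro cong_sum cong_mult cong_refl) (simp add: cong_int_iff flip: of_nat_power)
    with V p show ?thesis
      by (simp add: cong_dvd_iff)
  qed
  then have "int n dvd (\<Sum>i\<in>F. int (c i) * g i)"
    using assms(1) by (intro dvd_if_prime_power_factors_dvd) auto
  with c show ?thesis
    by blast
qed

lemma has_zero_sum_unit_weights:
  assumes "1 < n"
  shows "has_A_zero_sum n {c \<in> {1..n}. coprime c n} (Suc (size (prime_factorization n)))"
proof (rule has_A_zero_sumI)
  fix g :: "nat \<Rightarrow> int"
  define k where "k = size (prime_factorization n)"
  define levels where "levels = (SIGMA p:prime_factors n. {..<multiplicity p n})"
  have "card levels = (\<Sum>p\<in>prime_factors n. multiplicity p n)"
    by (simp add: levels_def)
  also have "\<dots> = k"
    unfolding k_def size_multiset_overloaded_eq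
    by (intro sum.cong) (auto simp: count_prime_factorization_prime in_prime_factors_imp_prime)
  finally have "card levels = k" .
  define parity where
    "parity S = {(p, l) \<in> levels. odd (card {i \<in> S. exact_power_dvd p l (g i)})}" for S
  obtain S T where ST: "S \<subseteq> {..<Suc k}" "T \<subseteq> {..<Suc k}" "S \<noteq> T" "parity S = parity T"
    using subsets_with_equal_image[of "Pow levels" "Suc k" parity] \<open>card levels = k\<close>
    by (auto simp: card_Pow levels_def parity_def)
  define F where "F = (S - T) \<union> (T - S)"
  have "finite S" "finite T"
    using ST(1,2) finite_subset by blast+
  have "\<exists>v. (\<forall>i. \<not> p dvd v i) \<and> int p ^ multiplicity p n dvd (\<Sum>i\<in>F. int (v i) * g i)"
    if p: "p \<in> prime_factors n" for p
  proof (rule prime_power_dvd_weighted_sum)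
    show "prime p" "finite F"
      using p \<open>finite S\<close> \<open>finite T\<close> by (auto simp: F_def in_prime_factors_imp_prime)
    fix l assume "l < multiplicity p n"
    then have "(p, l) \<in> parity S \<longleftrightarrow> (p, l) \<in> parity T"
      using ST(4) by simp
    then show "even (card {i \<in> F. exact_power_dvd p l (g i)})"
      unfolding F_def using p \<open>l < multiplicity p n\<close> \<open>finite S\<close> \<open>finite T\<close>
      by (intro even_card_filter_symdiff) (auto simp: parity_def levels_def)
  qed
  then obtain c where "\<forall>i. c i \<in> {1..n} \<and> coprime (c i) n" "int n dvd (\<Sum>i\<in>F. int (c i) * g i)"
    using unit_weights_from_prime_power_weights[OF assms] by blast
  moreover have "F \<subseteq> {..<Suc k}" "F \<noteq> {}"
    using ST(1-3) by (auto simp: F_def)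
  ultimately show "\<exists>I c. I \<subseteq> {..<Suc (size (prime_factorization n))} \<and> I \<noteq> {} \<and>
      (\<forall>i\<in>I. c i \<in> {c \<in> {1..n}. coprime c n}) \<and> int n dvd (\<Sum>i\<in>I. int (c i) * g i)"
    unfolding k_def by blast
qed

lemma no_zero_sum_unit_weights:
  assumes "0 < n"
  shows "\<not> has_A_zero_sum n {c \<in> {1..n}. coprime c n} (size (prime_factorization n))"
proof
  obtain L where L: "mset L = prime_factorization n"
    using ex_mset by blast
  have "prod_list L = n" "length L = size (prime_factorization n)"
    using assms L
    by (metis prod_mset_prod_list prod_mset_prime_factorization_nat size_mset not_gr_zero)+
  have L_prime: "prime p" and L_dvd: "p dvd n" if "p \<in> set L" for p
    using that L assms by (metis in_prime_factors_iff set_mset_mset)+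
  define g where "g j = int (prod_list (take j L))" for j
  assume "has_A_zero_sum n {c \<in> {1..n}. coprime c n} (size (prime_factorization n))"
  then obtain I and c :: "nat \<Rightarrow> nat" where I: "I \<subseteq> {..<length L}" "finite I" "I \<noteq> {}"
      "\<forall>i\<in>I. c i \<in> {c \<in> {1..n}. coprime c n}" "int n dvd (\<Sum>i\<in>I. int (c i) * g i)"
    unfolding \<open>length L = _\<close> by (rule has_A_zero_sumE)
  define j where "j = Min I"
  have "j \<in> I"
    using I(2,3) by (simp add: j_def)
  with I(1) have "j < length L"
    by auto
  define q where "q = prod_list (take (Suc j) L)"
  have q: "q = prod_list (take j L) * L ! j"
    using \<open>j < length L\<close> by (simp add: q_def take_Suc_conv_app_nth)
  have "int q dvd int (c j) * g j"
  proof (rule dvd_remaining_term[OF I(2) \<open>j \<in> I\<close>])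
    have "q dvd n"
      using prod_list_take_dvd[of "Suc j" "length L" L] \<open>j < length L\<close> \<open>prod_list L = n\<close>
      by (simp add: q_def)
    with I(5) show "int q dvd (\<Sum>i\<in>I. int (c i) * g i)"
      by (meson dvd_trans int_dvd_int_iff)
    fix i assume "i \<in> I" "i \<noteq> j"
    moreover have "j \<le> i"
      using I(2) \<open>i \<in> I\<close> by (simp add: j_def)
    ultimately have "q dvd prod_list (take i L)"
      unfolding q_def by (intro prod_list_take_dvd) simp
    then show "int q dvd int (c i) * g i"
      by (simp add: g_def)
  qed
  moreover have "g j \<noteq> 0"
    using L_prime[OF in_set_takeD, of 0 j] by (auto simp: g_def prod_list_zero_iff)
  ultimately have "L ! j dvd c j"
    by (simp add: q g_def mult.commute flip: of_nat_mult)
  moreover have "L ! j \<in> set L"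
    using \<open>j < length L\<close> by simp
  ultimately show False
    using I(4) \<open>j \<in> I\<close> L_prime L_dvd
    by (metis (no_types, lifting) coprime_common_divisor mem_Collect_eq not_prime_unit)
qed

lemma dA_unit_weights:
  assumes "1 < n"
  shows "dA n {c \<in> {1..n}. coprime c n} = Suc (size (prime_factorization n))"
  using assms by (intro dA_eq_Suc has_zero_sum_unit_weights no_zero_sum_unit_weights) auto

theorem theorem2:
  fixes n :: nat
  assumes "1 < n" and "\<not> prime n"
  shows "(\<forall>a\<in>{1..n}. dA n {a} = n div gcd a n)
       \<and> (\<forall>a\<in>{1..n}. coprime a n \<longrightarrow> dA n {a, n - a} = 1 + nat \<lfloor>log 2 (real n)\<rfloor>)
       \<and> dA n {a\<in>{1..n}. coprime a n} = 1 + size (prime_factorization n)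
       \<and> dA n {1..n - 1} = 2"
  using assms(1) dA_unit_weights[OF assms(1)] dA_all_nonzero_weights[OF assms(1)]
  by (simp add: dA_singleton dA_opposite_weights)

end
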